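(* Let $n\ge 1$ and let $p=p_1\cdots p_n$ be a permutation of $\{1,\dots,n\}$ with $p_n=1$. Then the following are equivalent: (A) $p$ is strongly 312-avoiding; (B) there is an integer $k$ with $n/2\le k\le n$ such that $p=(k+1)(k+2)\cdots n\; k(k-1)\cdots 2\,1$, i.e. $p$ lists the $n-k$ largest values in increasing order followed by the $k$ smallest values in decreasing order.
   Context: Permutations are written in one-line notation $p=p_1\cdots p_n$ with $p_i=p(i)$. $p$ contains a pattern $q=q_1\cdots q_m$ if there are indices $i_1<\cdots<i_m$ with $p_{i_r}<p_{i_s}$ iff $q_r<q_s$; otherwise $p$ avoids $q$. $p^2(i)=p(p(i))$. A permutation $p$ is strongly $q$-avoiding if both $p$ and $p^2$ avoid $q$. *)

theory Defs
  imports "HOL-Combinatorics.Permutations"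
begin

text \<open>A permutation of {1..n} is a function p :: nat => nat with p permutes {1..n};
  its one-line notation is p 1, ..., p n. A pattern q = q_1 ... q_m is given as a list
  [q_1, ..., q_m].\<close>

definition contains_pattern :: "nat \<Rightarrow> (nat \<Rightarrow> nat) \<Rightarrow> nat list \<Rightarrow> bool" where
  "contains_pattern n p q \<longleftrightarrow>
     (\<exists>ix :: nat list. length ix = length q \<and> sorted_wrt (<) ix \<and> set ix \<subseteq> {1..n} \<and>
        (\<forall>r < length q. \<forall>s < length q. (p (ix ! r) < p (ix ! s) \<longleftrightarrow> q ! r < q ! s)))"

definition avoids_pattern :: "nat \<Rightarrow> (nat \<Rightarrow> nat) \<Rightarrow> nat list \<Rightarrow> bool" where
  "avoids_pattern n p q \<longleftrightarrow> \<not> contains_pattern n p q"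

definition strongly_avoids :: "nat \<Rightarrow> (nat \<Rightarrow> nat) \<Rightarrow> nat list \<Rightarrow> bool" where
  "strongly_avoids n p q \<longleftrightarrow> avoids_pattern n p q \<and> avoids_pattern n (p \<circ> p) q"

end

theory Submission
  imports Defs
begin

text \<open>Let \<open>t\<close> be the position of the largest value \<open>n\<close>. Since \<open>p\<close> avoids 312, \<open>p\<close> decreases
  after \<open>t\<close>; since \<open>p\<^sup>2(t) = p(n) = 1\<close> and \<open>p\<^sup>2\<close> avoids 312, every value of \<open>p\<^sup>2\<close> before \<open>t\<close>
  is smaller than every value after \<open>t\<close>. Playing these two facts against each other with the
  help of \<open>p(1)\<close> shows \<open>t < p(1)\<close>, \<open>p(t+1) = p(1) - 1\<close> and that \<open>p\<close> increases before \<open>t\<close>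
  through values \<open>\<ge> p(1)\<close>; counting then pins down \<open>p\<close> with \<open>k = p(1) - 1 = n - t\<close>.
  Conversely, the square of such a \<open>p\<close> consists of three monotone blocks of consecutive values
  (decreasing, increasing, decreasing, each above the previous one), and neither \<open>p\<close> nor
  \<open>p\<^sup>2\<close> has room for a 312.\<close>

lemma contains_312_iff:
  "contains_pattern n f [3,1,2] \<longleftrightarrow>
     (\<exists>i j l. 1 \<le> i \<and> i < j \<and> j < l \<and> l \<le> n \<and> f j < f l \<and> f l < f i)"
proof
  assume "contains_pattern n f [3,1,2]"
  then obtain ix :: "nat list" where ix: "length ix = 3" "sorted_wrt (<) ix" "set ix \<subseteq> {1..n}"
    and cmp: "\<forall>r<3. \<forall>s<3. (f (ix ! r) < f (ix ! s) \<longleftrightarrow> [3::nat,1,2] ! r < [3,1,2] ! s)"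
    unfolding contains_pattern_def by (auto simp: numeral_3_eq_3)
  have "ix ! 0 < ix ! 1" "ix ! 1 < ix ! 2"
    using ix(1,2) by (auto simp: sorted_wrt_iff_nth_less)
  moreover have "ix ! 0 \<in> {1..n}" "ix ! 2 \<in> {1..n}"
    using ix(1) subsetD[OF ix(3), of "ix ! 0"] subsetD[OF ix(3), of "ix ! 2"] by auto
  moreover have "f (ix ! 1) < f (ix ! 2)" "f (ix ! 2) < f (ix ! 0)"
    using cmp by auto
  ultimately show "\<exists>i j l. 1 \<le> i \<and> i < j \<and> j < l \<and> l \<le> n \<and> f j < f l \<and> f l < f i"
    by (intro exI[of _ "ix!0"] exI[of _ "ix!1"] exI[of _ "ix!2"]) auto
next
  assume "\<exists>i j l. 1 \<le> i \<and> i < j \<and> j < l \<and> l \<le> n \<and> f j < f l \<and> f l < f i"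
  then obtain i j l where h: "1 \<le> i" "i < j" "j < l" "l \<le> n" "f j < f l" "f l < f i"
    by blast
  then have "\<forall>r<3. \<forall>s<3. (f ([i,j,l] ! r) < f ([i,j,l] ! s) \<longleftrightarrow> [3::nat,1,2] ! r < [3,1,2] ! s)"
    by (auto simp: numeral_3_eq_3 less_Suc_eq)
  then show "contains_pattern n f [3,1,2]"
    unfolding contains_pattern_def using h by (intro exI[of _ "[i,j,l]"]) auto
qed

lemma strict_mono_on_nat_gap:
  fixes f :: "nat \<Rightarrow> nat"
  assumes "strict_mono_on {a..b} f" and "a \<le> b"
  shows "f a + (b - a) \<le> f b"
  using assms
proof (induction b)
  case (Suc b)
  show ?case
  proof (cases "a = Suc b")
    case False
    then have "a \<le> b" using Suc.prems by simp
    have "f a + (b - a) \<le> f b"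
      using Suc.IH monotone_on_subset[OF Suc.prems(1)] \<open>a \<le> b\<close> by auto
    moreover have "f b < f (Suc b)"
      using monotone_onD[OF Suc.prems(1)] \<open>a \<le> b\<close> by simp
    ultimately show ?thesis using \<open>a \<le> b\<close> by simp
  qed simp
qed simp

lemma strict_antimono_on_nat_gap:
  fixes f :: "nat \<Rightarrow> nat"
  assumes "strict_antimono_on {a..b} f" and "a \<le> b"
  shows "f b + (b - a) \<le> f a"
  using assms
proof (induction b)
  case (Suc b)
  show ?case
  proof (cases "a = Suc b")
    case False
    then have "a \<le> b" using Suc.prems by simp
    have "f b + (b - a) \<le> f a"
      using Suc.IH monotone_on_subset[OF Suc.prems(1)] \<open>a \<le> b\<close> by auto
    moreover have "f (Suc b) < f b"
      using monotone_onD[OF Suc.prems(1)] \<open>a \<le> b\<close> by simp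
    ultimately show ?thesis using \<open>a \<le> b\<close> by simp
  qed simp
qed simp

locale strongly_312_avoiding_ending_in_one =
  fixes n :: nat and p :: "nat \<Rightarrow> nat"
  assumes perm: "p permutes {1..n}" and ends_in_one: "p n = 1" and two_le: "2 \<le> n"
    and avoids: "strongly_avoids n p [3,1,2]"
begin

definition peak :: nat where "peak = inv p n"

lemma p_eq_iff: "p x = p y \<longleftrightarrow> x = y"
  using permutes_inj[OF perm] by (simp add: inj_eq)

lemma p_in_range: "i \<in> {1..n} \<Longrightarrow> p i \<in> {1..n}"
  using permutes_in_image[OF perm] by blast

lemma p_image: "p ` {1..n} = {1..n}"
  using permutes_image[OF perm] .

lemma no_312: "1 \<le> i \<Longrightarrow> i < j \<Longrightarrow> j < l \<Longrightarrow> l \<le> n \<Longrightarrow> \<not> (p j < p l \<and> p l < p i)"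
  using avoids unfolding strongly_avoids_def avoids_pattern_def contains_312_iff by blast

lemma no_312_sq:
  "1 \<le> i \<Longrightarrow> i < j \<Longrightarrow> j < l \<Longrightarrow> l \<le> n \<Longrightarrow> \<not> (p (p j) < p (p l) \<and> p (p l) < p (p i))"
  using avoids unfolding strongly_avoids_def avoids_pattern_def contains_312_iff by auto

lemma p_peak: "p peak = n"
  unfolding peak_def using permutes_inverses(1)[OF perm] .

lemma peak_bounds: "1 \<le> peak" "peak < n"
proof -
  have "peak \<in> {1..n}"
    unfolding peak_def using permutes_in_image[OF permutes_inv[OF perm]] two_le by simp
  moreover have "peak \<noteq> n" using p_peak ends_in_one two_le by auto
  ultimately show "1 \<le> peak" "peak < n" by auto
qed

lemma first_ne_one: "p 1 \<noteq> 1"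
  using p_eq_iff[of 1 n] ends_in_one two_le by auto

lemma decreasing_after_peak: "peak < j \<Longrightarrow> j < l \<Longrightarrow> l \<le> n \<Longrightarrow> p l < p j"
  using no_312[of peak j l] peak_bounds p_eq_iff[of l peak] p_eq_iff[of j l] p_in_range[of l] p_peak
  by fastforce

lemma decreasing_below_first:
  "1 < a \<Longrightarrow> a < b \<Longrightarrow> b \<le> n \<Longrightarrow> p a < p 1 \<Longrightarrow> p b < p 1 \<Longrightarrow> p b < p a"
  using no_312[of 1 a b] p_eq_iff[of a b] by auto

lemma sq_increasing_across_peak:
  assumes "1 \<le> i" "i < peak" "peak < l" "l \<le> n"
  shows "p (p i) < p (p l)"
proof -
  have "p (p peak) = 1" using p_peak ends_in_one by simp
  moreover have "p (p l) \<noteq> 1" "p (p i) \<noteq> p (p l)"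
    using assms p_eq_iff[of "p l" n] p_eq_iff[of l peak] p_eq_iff[of "p i" "p l"] p_eq_iff[of i l]
      p_peak ends_in_one by auto
  moreover have "p (p l) \<in> {1..n}" using assms peak_bounds p_in_range by simp
  ultimately show ?thesis using no_312_sq[of i peak l] assms by fastforce
qed

text \<open>\<open>p\<^sup>2\<close> maps \<open>{1..peak}\<close> injectively below \<open>p\<^sup>2(n) = p(1)\<close>.\<close>

lemma peak_less_first: "peak < p 1"
proof -
  have "(\<lambda>i. p (p i)) ` {1..peak} \<subseteq> {1..p 1 - 1}"
  proof
    fix y assume "y \<in> (\<lambda>i. p (p i)) ` {1..peak}"
    then obtain i where i: "i \<in> {1..peak}" "y = p (p i)" by auto
    have "1 \<le> y" using i peak_bounds p_in_range[of i] p_in_range[of "p i"] by auto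
    moreover have "y < p 1"
    proof (cases "i = peak")
      case True
      then show ?thesis using i p_peak ends_in_one first_ne_one p_in_range[of 1] two_le by auto
    next
      case False
      then show ?thesis using i sq_increasing_across_peak[of i n] peak_bounds ends_in_one by simp
    qed
    ultimately show "y \<in> {1..p 1 - 1}" by simp
  qed
  moreover have "inj_on (\<lambda>i. p (p i)) {1..peak}" by (simp add: inj_on_def p_eq_iff)
  ultimately have "card {1..peak} \<le> card {1..p 1 - 1}" by (intro card_inj_on_le) auto
  then show ?thesis using first_ne_one p_in_range[of 1] two_le by (simp, linarith)
qed

lemma after_peak_less_first: "p (Suc peak) < p 1"
proof -
  have "p (Suc peak) \<noteq> p 1" using p_eq_iff peak_bounds by simp
  moreover have "\<not> p 1 < p (Suc peak)"
  proof
    assume less: "p 1 < p (Suc peak)"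
    have "Suc peak \<in> {1..n}" using peak_bounds by simp
    then have "peak \<noteq> 1" using less p_peak p_in_range[of "Suc peak"] by auto
    then have "p (p 1) < p (p (Suc peak))"
      using sq_increasing_across_peak[of 1 "Suc peak"] peak_bounds by simp
    moreover have "p (p (Suc peak)) < p (p 1)"
      using decreasing_after_peak[of "p 1" "p (Suc peak)"] peak_less_first less
        p_in_range[OF \<open>Suc peak \<in> {1..n}\<close>] by simp
    ultimately show False by simp
  qed
  ultimately show ?thesis by simp
qed

text \<open>If \<open>p(peak + 1) < p(1) - 1\<close>, the value \<open>p(1) - 1\<close> sits at a position \<open>j\<close> strictly between \<open>1\<close> and \<open>peak\<close>, and
  the preimages of \<open>peak\<close> and \<open>j\<close> together with \<open>n\<close> form a 312 in \<open>p\<^sup>2\<close>.\<close>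

lemma first_minus_one_le_after_peak: "p 1 - 1 \<le> p (Suc peak)"
proof (rule ccontr)
  assume low: "\<not> p 1 - 1 \<le> p (Suc peak)"
  have first: "p 1 \<in> {1..n}" using p_in_range two_le by simp
  have "p 1 - 1 \<in> {1..n}" using first first_ne_one by auto
  then obtain j where j: "j \<in> {1..n}" "p j = p 1 - 1"
    using p_image by (metis image_iff)
  have "j \<noteq> 1" using j first by auto
  moreover have "j \<noteq> peak" using j first p_peak by auto
  moreover have "\<not> peak < j"
  proof
    assume "peak < j"
    then have "p j \<le> p (Suc peak)"
      using decreasing_after_peak[of "Suc peak" j] j by (cases "j = Suc peak") auto
    then show False using low j by simp
  qed
  ultimately have j_between: "1 < j" "j < peak" using j by auto
  have "peak \<in> {1..n}" using peak_bounds by simp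
  then obtain s where s: "s \<in> {1..n}" "p s = peak"
    using p_image by (metis image_iff)
  obtain l where l: "l \<in> {1..n}" "p l = j"
    using p_image j by (metis image_iff)
  have "s \<noteq> 1" "l \<noteq> 1" using s l j_between peak_less_first by auto
  moreover have "l \<noteq> s" using s l j_between by auto
  ultimately have "s < l"
    using decreasing_below_first[of l s] s l j_between peak_less_first by fastforce
  moreover have "l \<noteq> n" using l j_between ends_in_one by auto
  moreover have first_ne_n: "p 1 \<noteq> n" using p_eq_iff[of 1 peak] p_peak j_between by auto
  ultimately have "\<not> (p (p l) < p (p n) \<and> p (p n) < p (p s))"
    using no_312_sq[of s l n] s l \<open>s \<noteq> 1\<close> by auto
  then show False using l j s p_peak ends_in_one first first_ne_one first_ne_n by auto
qed

lemma after_peak: "p (Suc peak) = p 1 - 1"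
  using after_peak_less_first first_minus_one_le_after_peak by simp

lemma first_le_before_peak: "1 \<le> i \<Longrightarrow> i < peak \<Longrightarrow> p 1 \<le> p i"
  using decreasing_below_first[of i "Suc peak"] after_peak after_peak_less_first peak_bounds
  by (cases "i = 1") fastforce+

lemma before_peak_less_n: "1 \<le> i \<Longrightarrow> i < peak \<Longrightarrow> p i < n"
  using p_eq_iff[of i peak] p_peak p_in_range[of i] peak_bounds by fastforce

text \<open>A descent \<open>p(b) < p(a)\<close> before \<open>peak\<close> would make \<open>1, a, b\<close> a 312 in \<open>p\<^sup>2\<close>, because \<open>p\<close> is
  decreasing on the values \<open>p(1) < p(b) < p(a)\<close>, which all lie after \<open>peak\<close>.\<close>

lemma increasing_before_peak:
  assumes "1 \<le> a" "a < b" "b < peak"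
  shows "p a < p b"
proof -
  have pb: "p 1 < p b"
    using first_le_before_peak[of b] p_eq_iff[of b 1] assms by fastforce
  show ?thesis
  proof (cases "a = 1")
    case False
    show ?thesis
    proof (rule ccontr)
      assume "\<not> p a < p b"
      then have ab: "p b < p a" using p_eq_iff[of a b] assms by auto
      have "p a < n" "p b < n" using before_peak_less_n assms by auto
      then have "p (p a) < p (p b)" "p (p b) < p (p 1)"
        using decreasing_after_peak[of "p b" "p a"] decreasing_after_peak[of "p 1" "p b"]
          ab pb peak_less_first by auto
      then show False using no_312_sq[of 1 a b] assms False peak_bounds by auto
    qed
  qed (use pb in simp)
qed

lemma before_peak_bounds:
  assumes "1 \<le> i" "i < peak"
  shows "p 1 + (i - 1) \<le> p i" and "p i + (peak - i) \<le> n"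
proof -
  have mono: "strict_mono_on {1..peak - 1} p"
    by (rule monotone_onI) (auto intro: increasing_before_peak)
  show "p 1 + (i - 1) \<le> p i"
    using strict_mono_on_nat_gap[OF monotone_on_subset[OF mono, of "{1..i}"]] assms by auto
  have "p i + (peak - 1 - i) \<le> p (peak - 1)"
    using strict_mono_on_nat_gap[OF monotone_on_subset[OF mono, of "{i..peak - 1}"]] assms by auto
  moreover have "p (peak - 1) < n" using before_peak_less_n assms by auto
  ultimately show "p i + (peak - i) \<le> n" using assms by arith
qed

lemma after_peak_bounds:
  assumes "peak < i" "i \<le> n"
  shows "n + 1 - i \<le> p i" and "p i + (i - Suc peak) \<le> p 1 - 1"
proof -
  have antimono: "strict_antimono_on {Suc peak..n} p"
    by (rule monotone_onI) (auto intro: decreasing_after_peak)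
  show "n + 1 - i \<le> p i"
    using strict_antimono_on_nat_gap[OF monotone_on_subset[OF antimono, of "{i..n}"]]
      assms ends_in_one by auto
  show "p i + (i - Suc peak) \<le> p 1 - 1"
    using strict_antimono_on_nat_gap[OF monotone_on_subset[OF antimono, of "{Suc peak..i}"]]
      assms after_peak by auto
qed

lemma first_plus_peak: "p 1 + peak = n + 1"
proof (rule antisym)
  show "p 1 + peak \<le> n + 1"
  proof (cases "peak = 1")
    case True
    then show ?thesis using p_in_range[of 1] two_le by simp
  next
    case False
    then show ?thesis using before_peak_bounds[of "peak - 1"] peak_bounds by arith
  qed
  show "n + 1 \<le> p 1 + peak"
    using after_peak_bounds(2)[of n] peak_bounds ends_in_one first_ne_one by simp
qed

lemma shape:
  assumes "i \<in> {1..n}"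
  shows "p i = (if i \<le> peak then p 1 - 1 + i else n + 1 - i)"
proof (cases i peak rule: linorder_cases)
  case less
  then have "p 1 + i \<le> p i + 1" "p i + peak \<le> n + i" using before_peak_bounds[of i] assms by auto
  then show ?thesis using less first_plus_peak peak_bounds by simp
next
  case equal
  then show ?thesis using first_plus_peak p_peak peak_bounds by simp
next
  case greater
  then show ?thesis using after_peak_bounds[of i] first_plus_peak assms by simp
qed

end

lemma strongly_312_avoiding_ending_in_one_shape:
  assumes "1 \<le> n" and "p permutes {1..n}" and "p n = 1" and "strongly_avoids n p [3,1,2]"
  shows "\<exists>k. n \<le> 2 * k \<and> k \<le> n \<and>
           (\<forall>i \<in> {1..n}. p i = (if i \<le> n - k then k + i else n + 1 - i))"
proof (cases "n = 1")
  case True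
  then show ?thesis using assms(3) by (intro exI[of _ 1]) auto
next
  case False
  then have "2 \<le> n" using assms(1) by simp
  then interpret strongly_312_avoiding_ending_in_one n p
    using assms(2-4) by unfold_locales
  show ?thesis
  proof (intro exI[of _ "p 1 - 1"] conjI ballI)
    show "n \<le> 2 * (p 1 - 1)" "p 1 - 1 \<le> n" using first_plus_peak peak_less_first by simp_all
    have "n - (p 1 - 1) = peak" using first_plus_peak peak_bounds by simp
    then show "p i = (if i \<le> n - (p 1 - 1) then p 1 - 1 + i else n + 1 - i)" if "i \<in> {1..n}" for i
      using shape[OF that] by simp
  qed
qed

lemma strongly_312_avoiding_if_shape:
  assumes "n \<le> 2 * k" and "k \<le> n"
    and shape: "\<forall>i \<in> {1..n}. p i = (if i \<le> n - k then k + i else n + 1 - i)"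
  shows "strongly_avoids n p [3,1,2]"
proof -
  have p_cases: "x + k \<le> n \<and> p x = k + x \<or> n < x + k \<and> p x + x = n + 1" if "x \<in> {1..n}" for x
    using shape that by auto
  have sq_cases:
    "x + k \<le> n \<and> p (p x) + x + k = n + 1 \<or> n < x + k \<and> x \<le> k \<and> p (p x) = x
       \<or> k < x \<and> p (p x) + x = k + n + 1" if "x \<in> {1..n}" for x
  proof -
    have "p x \<in> {1..n}" using p_cases[OF that] that by auto
    from p_cases[OF that] p_cases[OF this] show ?thesis using assms(1,2) that by auto
  qed
  have "\<not> (p j < p l \<and> p l < p i)" if "1 \<le> i" "i < j" "j < l" "l \<le> n" for i j l
  proof -
    have "i \<in> {1..n}" "j \<in> {1..n}" "l \<in> {1..n}" using that by auto
    from p_cases[OF this(1)] p_cases[OF this(2)] p_cases[OF this(3)] show ?thesis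
      using that assms(1,2) by (elim disjE conjE) linarith+
  qed
  moreover have "\<not> (p (p j) < p (p l) \<and> p (p l) < p (p i))"
    if "1 \<le> i" "i < j" "j < l" "l \<le> n" for i j l
  proof -
    have "i \<in> {1..n}" "j \<in> {1..n}" "l \<in> {1..n}" using that by auto
    from sq_cases[OF this(1)] sq_cases[OF this(2)] sq_cases[OF this(3)] show ?thesis
      using that assms(1,2) by (elim disjE conjE) linarith+
  qed
  ultimately show ?thesis
    unfolding strongly_avoids_def avoids_pattern_def contains_312_iff by auto
qed

theorem theorem3p1:
  fixes n :: nat and p :: "nat \<Rightarrow> nat"
  assumes "n \<ge> 1" and "p permutes {1..n}" and "p n = 1"
  shows "strongly_avoids n p [3,1,2] \<longleftrightarrow>
         (\<exists>k::nat. n \<le> 2 * k \<and> k \<le> n \<and>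
            (\<forall>i \<in> {1..n}. p i = (if i \<le> n - k then k + i else n + 1 - i)))"
  using strongly_312_avoiding_ending_in_one_shape[OF assms] strongly_312_avoiding_if_shape by blast

end
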